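(* For every small category $C$, the category $Sd^2(C)=Sd(Sd(C))$ is a poset; that is, for any two objects $X,Y$ of $Sd^2(C)$ there is at most one morphism $X\to Y$, and if there are morphisms $X\to Y$ and $Y\to X$ then $X=Y$.
   Context: Let $C$ be a small category. For $q\ge 0$ let $[q]=\{0<1<\dots<q\}$, viewed as a category. A $q$-simplex of the nerve $NC$ is a functor $X:[q]\to C$, i.e. a chain $X_0\to X_1\to\dots\to X_q$ of $q$ composable arrows of $C$; write $q_X=q$. A simplex is degenerate if it is of the form $Y\circ s$ for a simplex $Y$ and a surjective order-preserving map $s:[q]\to[p]$ with $p<q$ (equivalently, one of its arrows $X_{i-1}\to X_i$ is an identity); otherwise it is non-degenerate. The category $\Delta/C$ has as objects all simplices of $NC$ (of all dimensions $q\ge0$), and a morphism $X\to Y$ is an order-preserving map $\xi:[q_X]\to[q_Y]$ with $Y\circ\xi=X$, written $\xi_*$; composition is composition of maps. Given a simplex $X$ of dimension $q$ and a surjective order-preserving $s:[q+1]\to[q]$, let $d,d':[q]\to[q+1]$ be the two order-preserving right inverses of $s$; the two morphisms $d_*,d'_*:X\to X\circ s$ are called elementary equivalent. Let $\sim$ be the smallest equivalence relation on the morphisms of $\Delta/C$ (relating only morphisms with the same source and target) which is compatible with composition and contains all pairs of elementary equivalent morphisms. $[\Delta/C]$ is the quotient category with the same objects and with morphisms the $\sim$-classes $[\xi_*]$. The subdivision $Sd(C)$ is the full subcategory of $[\Delta/C]$ whose objects are the non-degenerate simplices of $NC$. Since $Sd(C)$ is again a small category, $Sd^2(C)=Sd(Sd(C))$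 is defined by applying the same construction to $Sd(C)$. *)

theory Defs
  imports Main
begin

text \<open>A small category given by a set of objects, a set of arrows, domain, codomain,
identities and composition (Comp g f = g o f).\<close>

record ('o, 'm) cat =
  Obj :: "'o set"
  Arr :: "'m set"
  Dom :: "'m \<Rightarrow> 'o"
  Cod :: "'m \<Rightarrow> 'o"
  Id  :: "'o \<Rightarrow> 'm"
  Comp :: "'m \<Rightarrow> 'm \<Rightarrow> 'm"

definition is_category :: "('o, 'm) cat \<Rightarrow> bool" where
  "is_category C \<longleftrightarrow>
     (\<forall>f \<in> Arr C. Dom C f \<in> Obj C \<and> Cod C f \<in> Obj C) \<and>
     (\<forall>x \<in> Obj C. Id C x \<in> Arr C \<and> Dom C (Id C x) = x \<and> Cod C (Id C x) = x) \<and>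
     (\<forall>f \<in> Arr C. \<forall>g \<in> Arr C. Cod C f = Dom C g \<longrightarrow>
         Comp C g f \<in> Arr C \<and> Dom C (Comp C g f) = Dom C f \<and> Cod C (Comp C g f) = Cod C g) \<and>
     (\<forall>f \<in> Arr C. Comp C f (Id C (Dom C f)) = f \<and> Comp C (Id C (Cod C f)) f = f) \<and>
     (\<forall>f \<in> Arr C. \<forall>g \<in> Arr C. \<forall>h \<in> Arr C. Cod C f = Dom C g \<longrightarrow> Cod C g = Dom C h \<longrightarrow>
         Comp C h (Comp C g f) = Comp C (Comp C h g) f)"

text \<open>A q-simplex is a functor [q] -> C, represented as the pair (q, F) where F (i,j),
for i \<le> j \<le> q, is the image of the unique arrow i -> j of [q]; F is undefined elsewhere.\<close>

type_synonym 'm simplex = "nat \<times> (nat \<times> nat \<Rightarrow> 'm)"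

definition is_functor_simplex :: "('o, 'm) cat \<Rightarrow> nat \<Rightarrow> (nat \<times> nat \<Rightarrow> 'm) \<Rightarrow> bool" where
  "is_functor_simplex C q F \<longleftrightarrow>
     (\<forall>i \<le> q. Dom C (F (i, i)) \<in> Obj C \<and> F (i, i) = Id C (Dom C (F (i, i)))) \<and>
     (\<forall>i j. i \<le> j \<and> j \<le> q \<longrightarrow>
        F (i, j) \<in> Arr C \<and> Dom C (F (i, j)) = Dom C (F (i, i)) \<and> Cod C (F (i, j)) = Dom C (F (j, j))) \<and>
     (\<forall>i j k. i \<le> j \<and> j \<le> k \<and> k \<le> q \<longrightarrow> F (i, k) = Comp C (F (j, k)) (F (i, j))) \<and>
     (\<forall>i j. \<not> (i \<le> j \<and> j \<le> q) \<longrightarrow> F (i, j) = undefined)"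

definition nerve :: "('o, 'm) cat \<Rightarrow> 'm simplex set" where
  "nerve C = {(q, F). is_functor_simplex C q F}"

definition opmap :: "nat \<Rightarrow> nat \<Rightarrow> (nat \<Rightarrow> nat) \<Rightarrow> bool" where
  "opmap p q \<xi> \<longleftrightarrow> (\<forall>i j. i \<le> j \<and> j \<le> p \<longrightarrow> \<xi> i \<le> \<xi> j) \<and> (\<forall>i \<le> p. \<xi> i \<le> q) \<and>
      (\<forall>i. p < i \<longrightarrow> \<xi> i = undefined)"

definition pull :: "'m simplex \<Rightarrow> nat \<Rightarrow> (nat \<Rightarrow> nat) \<Rightarrow> 'm simplex" where
  "pull Y p \<xi> = (p, \<lambda>(i, j). if i \<le> j \<and> j \<le> p then snd Y (\<xi> i, \<xi> j) else undefined)"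

definition mcomp :: "nat \<Rightarrow> (nat \<Rightarrow> nat) \<Rightarrow> (nat \<Rightarrow> nat) \<Rightarrow> (nat \<Rightarrow> nat)" where
  "mcomp p g f = (\<lambda>i. if i \<le> p then g (f i) else undefined)"

definition idmap :: "nat \<Rightarrow> (nat \<Rightarrow> nat)" where
  "idmap p = (\<lambda>i. if i \<le> p then i else undefined)"

definition degenerate :: "('o, 'm) cat \<Rightarrow> 'm simplex \<Rightarrow> bool" where
  "degenerate C X \<longleftrightarrow> (\<exists>Y s. Y \<in> nerve C \<and> fst Y < fst X \<and> opmap (fst X) (fst Y) s \<and>
       (\<forall>j \<le> fst Y. \<exists>i \<le> fst X. s i = j) \<and> X = pull Y (fst X) s)"

definition nondeg :: "('o, 'm) cat \<Rightarrow> 'm simplex set" where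
  "nondeg C = {X \<in> nerve C. \<not> degenerate C X}"

text \<open>A morphism of Delta/C is a triple (X, Y, \<xi>) with Y o \<xi> = X.\<close>

type_synonym 'm dmor = "'m simplex \<times> 'm simplex \<times> (nat \<Rightarrow> nat)"

definition is_mor :: "('o, 'm) cat \<Rightarrow> 'm simplex \<Rightarrow> 'm simplex \<Rightarrow> (nat \<Rightarrow> nat) \<Rightarrow> bool" where
  "is_mor C X Y \<xi> \<longleftrightarrow> X \<in> nerve C \<and> Y \<in> nerve C \<and> opmap (fst X) (fst Y) \<xi> \<and> pull Y (fst X) \<xi> = X"

text \<open>Elementary equivalent pairs: d_*, d'_* : X -> X o s for a surjection
s : [q+1] -> [q] and order-preserving right inverses d, d' of s.\<close>

definition elem_equiv :: "('o, 'm) cat \<Rightarrow> 'm dmor \<Rightarrow> 'm dmor \<Rightarrow> bool" where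
  "elem_equiv C m m' \<longleftrightarrow> (\<exists>X s d d'. X \<in> nerve C \<and>
      opmap (Suc (fst X)) (fst X) s \<and> (\<forall>j \<le> fst X. \<exists>i \<le> Suc (fst X). s i = j) \<and>
      opmap (fst X) (Suc (fst X)) d \<and> opmap (fst X) (Suc (fst X)) d' \<and>
      (\<forall>i \<le> fst X. s (d i) = i) \<and> (\<forall>i \<le> fst X. s (d' i) = i) \<and>
      m = (X, pull X (Suc (fst X)) s, d) \<and> m' = (X, pull X (Suc (fst X)) s, d'))"

inductive sim :: "('o, 'm) cat \<Rightarrow> 'm dmor \<Rightarrow> 'm dmor \<Rightarrow> bool" for C where
  sim_elem: "elem_equiv C m m' \<Longrightarrow> sim C m m'"
| sim_refl: "is_mor C X Y \<xi> \<Longrightarrow> sim C (X, Y, \<xi>) (X, Y, \<xi>)"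
| sim_sym: "sim C m m' \<Longrightarrow> sim C m' m"
| sim_trans: "sim C m m' \<Longrightarrow> sim C m' m'' \<Longrightarrow> sim C m m''"
| sim_comp: "sim C (X, Y, f) (X, Y, f') \<Longrightarrow> sim C (Y, Z, g) (Y, Z, g') \<Longrightarrow>
     sim C (X, Z, mcomp (fst X) g f) (X, Z, mcomp (fst X) g' f')"

definition cls :: "('o, 'm) cat \<Rightarrow> 'm simplex \<Rightarrow> 'm simplex \<Rightarrow> (nat \<Rightarrow> nat) \<Rightarrow> (nat \<Rightarrow> nat) set" where
  "cls C X Y \<xi> = {\<eta>. sim C (X, Y, \<eta>) (X, Y, \<xi>)}"

text \<open>Full subcategory of [Delta/C] on the non-degenerate simplices. An arrow is a triple
(X, Y, c) with c a ~-class of morphisms X -> Y.\<close>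

type_synonym 'm sdmor = "'m simplex \<times> 'm simplex \<times> (nat \<Rightarrow> nat) set"

definition Sd :: "('o, 'm) cat \<Rightarrow> ('m simplex, 'm sdmor) cat" where
  "Sd C = \<lparr> Obj = nondeg C,
            Arr = {(X, Y, c). X \<in> nondeg C \<and> Y \<in> nondeg C \<and> (\<exists>\<xi>. is_mor C X Y \<xi> \<and> c = cls C X Y \<xi>)},
            Dom = (\<lambda>(X, Y, c). X),
            Cod = (\<lambda>(X, Y, c). Y),
            Id = (\<lambda>X. (X, X, cls C X X (idmap (fst X)))),
            Comp = (\<lambda>(Y', Z, c2) (X, Y, c1).
               (X, Z, cls C X Z (mcomp (fst X) (SOME g. g \<in> c2) (SOME f. f \<in> c1)))) \<rparr>"

end

theory Submission imports Defs begin

text \<open>If an edge of a simplex of the nerve of a category is an identity, the simplex is degenerate.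
Hence a morphism of \<open>\<Delta>/D\<close> out of a non-degenerate simplex is strictly increasing, so it cannot
lower the dimension, and a non-degenerate simplex of \<open>Sd C\<close> is a chain of simplices of \<open>C\<close> of strictly
increasing dimension. In particular its vertices are pairwise distinct, so a morphism of \<open>\<Delta>/Sd C\<close>
into it is determined by its source: \<open>Sd (Sd C)\<close> has at most one arrow between two objects.
Arrows in both directions force equal dimensions, and a dimension-preserving morphism out of a
non-degenerate simplex is an identity.\<close>

definition unital :: "('o, 'm) cat \<Rightarrow> bool" where
  "unital D \<longleftrightarrow> (\<forall>x \<in> Obj D. Cod D (Id D x) = x) \<and>
     (\<forall>f \<in> Arr D. Comp D f (Id D (Dom D f)) = f \<and> Comp D (Id D (Cod D f)) f = f)"

lemma category_unital: "is_category C \<Longrightarrow> unital C"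
  unfolding is_category_def unital_def by blast

lemma nerveD:
  assumes "(q, F) \<in> nerve D"
  shows "\<And>i. i \<le> q \<Longrightarrow> Dom D (F (i, i)) \<in> Obj D \<and> F (i, i) = Id D (Dom D (F (i, i)))"
    and "\<And>i j. i \<le> j \<Longrightarrow> j \<le> q \<Longrightarrow>
           F (i, j) \<in> Arr D \<and> Dom D (F (i, j)) = Dom D (F (i, i)) \<and> Cod D (F (i, j)) = Dom D (F (j, j))"
    and "\<And>i j k. i \<le> j \<Longrightarrow> j \<le> k \<Longrightarrow> k \<le> q \<Longrightarrow> F (i, k) = Comp D (F (j, k)) (F (i, j))"
    and "\<And>i j. \<not> (i \<le> j \<and> j \<le> q) \<Longrightarrow> F (i, j) = undefined"
  using assms unfolding nerve_def is_functor_simplex_def by blast+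

lemma opmapD:
  assumes "opmap p q \<xi>"
  shows "\<And>i j. i \<le> j \<Longrightarrow> j \<le> p \<Longrightarrow> \<xi> i \<le> \<xi> j"
    and "\<And>i. i \<le> p \<Longrightarrow> \<xi> i \<le> q"
    and "\<And>i. p < i \<Longrightarrow> \<xi> i = undefined"
  using assms unfolding opmap_def by blast+

lemma pull_apply: "a \<le> b \<Longrightarrow> b \<le> p \<Longrightarrow> snd (pull Y p \<xi>) (a, b) = snd Y (\<xi> a, \<xi> b)"
  by (simp add: pull_def)

lemma pull_in_nerve:
  assumes X: "X \<in> nerve D" and \<theta>: "opmap r (fst X) \<theta>"
  shows "pull X r \<theta> \<in> nerve D"
proof -
  obtain q F where XF: "X = (q, F)" by (cases X)
  note F = nerveD[OF X[unfolded XF]]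
  note mono = opmapD(1)[OF \<theta>] and bound = opmapD(2)[OF \<theta>[unfolded XF fst_conv]]
  show ?thesis
    unfolding XF pull_def nerve_def is_functor_simplex_def
  proof (simp, intro conjI allI impI)
    fix i assume "i \<le> r"
    thus "Dom D (F (\<theta> i, \<theta> i)) \<in> Obj D" "F (\<theta> i, \<theta> i) = Id D (Dom D (F (\<theta> i, \<theta> i)))"
      using F(1)[of "\<theta> i"] bound[of i] by auto
  next
    fix i j assume "i \<le> j \<and> j \<le> r"
    hence "\<theta> i \<le> \<theta> j" "\<theta> j \<le> q" using mono[of i j] bound[of j] by auto
    thus "F (\<theta> i, \<theta> j) \<in> Arr D" "Dom D (F (\<theta> i, \<theta> j)) = Dom D (F (\<theta> i, \<theta> i))"
      "Cod D (F (\<theta> i, \<theta> j)) = Dom D (F (\<theta> j, \<theta> j))" using F(2)[of "\<theta> i" "\<theta> j"] by auto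
  next
    fix i j k assume "i \<le> j \<and> j \<le> k \<and> k \<le> r"
    hence "\<theta> i \<le> \<theta> j" "\<theta> j \<le> \<theta> k" "\<theta> k \<le> q" using mono[of i j] mono[of j k] bound[of k] by auto
    thus "F (\<theta> i, \<theta> k) = Comp D (F (\<theta> j, \<theta> k)) (F (\<theta> i, \<theta> j))"
      using F(3)[of "\<theta> i" "\<theta> j" "\<theta> k"] by auto
  qed
qed

lemma pull_idmap:
  assumes "Y \<in> nerve D"
  shows "pull Y (fst Y) (idmap (fst Y)) = Y"
proof (cases Y)
  case (Pair q G)
  thus ?thesis using nerveD(4)[of q G D] assms by (auto simp: pull_def idmap_def fun_eq_iff)
qed

lemma is_mor_apply:
  "is_mor D X Y \<xi> \<Longrightarrow> a \<le> b \<Longrightarrow> b \<le> fst X \<Longrightarrow> snd X (a, b) = snd Y (\<xi> a, \<xi> b)"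
  unfolding is_mor_def by (metis pull_apply)

lemma is_mor_idmap:
  assumes "X \<in> nerve D"
  shows "is_mor D X X (idmap (fst X))"
proof -
  have "opmap (fst X) (fst X) (idmap (fst X))" by (simp add: opmap_def idmap_def)
  thus ?thesis using assms pull_idmap by (simp add: is_mor_def)
qed

lemma identity_edge_collapse:
  assumes D: "unital D" and X: "(p, F) \<in> nerve D" and i: "i < p"
    and edge: "F (i, Suc i) = F (i, i)" and ab: "a \<le> b" "b \<le> p"
  shows "F (a, b) = F (if a = Suc i then i else a, if b = Suc i then i else b)"
proof -
  note F = nerveD[OF X]
  have Cod_Id: "Cod D (F (i, i)) = Dom D (F (i, i))"
    using F(1)[of i] i D unfolding unital_def by (metis less_imp_le)
  have vertex: "Dom D (F (Suc i, Suc i)) = Dom D (F (i, i))"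
    using F(2)[of i "Suc i"] i edge Cod_Id by auto
  consider "a \<noteq> Suc i" "b \<noteq> Suc i" | "a = Suc i" "b = Suc i" | "a = Suc i" "b \<noteq> Suc i"
    | "a \<noteq> Suc i" "b = Suc i" by blast
  thus ?thesis
  proof cases
    case 1 thus ?thesis by simp
  next
    case 2 thus ?thesis using F(1)[of i] F(1)[of "Suc i"] i vertex by auto
  next
    case 3
    have "F (i, b) = Comp D (F (Suc i, b)) (F (i, Suc i))" using F(3)[of i "Suc i" b] 3 ab by auto
    also have "\<dots> = Comp D (F (Suc i, b)) (Id D (Dom D (F (Suc i, b))))"
      using edge F(1)[of i] F(2)[of "Suc i" b] vertex 3 ab i by auto
    also have "\<dots> = F (Suc i, b)" using D F(2)[of "Suc i" b] 3 ab unfolding unital_def by blast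
    finally show ?thesis using 3 by simp
  next
    case 4
    have "F (a, Suc i) = Comp D (F (i, Suc i)) (F (a, i))" using F(3)[of a i "Suc i"] 4 ab by auto
    also have "\<dots> = Comp D (Id D (Cod D (F (a, i)))) (F (a, i))"
      using edge F(1)[of i] F(2)[of a i] 4 ab i by auto
    also have "\<dots> = F (a, i)"
      using D F(2)[of a i] 4 ab i unfolding unital_def by (metis le_SucE less_imp_le)
    finally show ?thesis using 4 by simp
  qed
qed

lemma degenerate_if_identity_edge:
  assumes D: "unital D" and X: "(p, F) \<in> nerve D" and i: "i < p" and edge: "F (i, Suc i) = F (i, i)"
  shows "degenerate D (p, F)"
proof -
  \<comment> \<open>\<open>(p, F)\<close> factors through the face \<open>Y\<close> missing vertex \<open>i + 1\<close>, via the collapse \<open>s\<close> of \<open>i + 1\<close> onto \<open>i\<close>.\<close>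
  define \<delta> where "\<delta> = (\<lambda>k. if k \<le> p - 1 then (if k \<le> i then k else Suc k) else undefined)"
  define s where "s = (\<lambda>k. if k \<le> p then (if k \<le> i then k else k - 1) else undefined)"
  define Y where "Y = pull (p, F) (p - 1) \<delta>"
  have "opmap (p - 1) p \<delta>" unfolding opmap_def \<delta>_def using i by auto
  hence Y: "Y \<in> nerve D" using pull_in_nerve[OF X] Y_def by simp
  have dim: "fst Y = p - 1" by (simp add: Y_def pull_def)
  have s: "opmap p (p - 1) s" unfolding opmap_def s_def using i by auto
  have surj: "\<exists>k \<le> p. s k = j" if "j \<le> p - 1" for j
  proof (cases "j \<le> i")
    case True thus ?thesis using i by (intro exI[of _ j]) (simp add: s_def)
  next
    case False thus ?thesis using i that by (intro exI[of _ "Suc j"]) (simp add: s_def)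
  qed
  have \<delta>_s: "\<delta> (s k) = (if k = Suc i then i else k)" if "k \<le> p" for k
    using that i by (auto simp: s_def \<delta>_def)
  have "F (a, b) = snd (pull Y p s) (a, b)" for a b
  proof (cases "a \<le> b \<and> b \<le> p")
    case True
    hence "s a \<le> s b" "s b \<le> p - 1" using opmapD[OF s] by auto
    hence "snd (pull Y p s) (a, b) = F (\<delta> (s a), \<delta> (s b))"
      using True by (simp add: pull_apply Y_def)
    thus ?thesis using True \<delta>_s identity_edge_collapse[OF D X i edge, of a b] by simp
  next
    case False thus ?thesis using nerveD(4)[OF X, of a b] by (auto simp: pull_def)
  qed
  hence "(p, F) = pull Y p s" by (simp add: pull_def fun_eq_iff)
  moreover have "fst Y < p" using dim i by simp
  ultimately show ?thesis
    unfolding degenerate_def fst_conv using Y s surj dim by (intro exI[of _ Y] exI[of _ s]) simp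
qed

lemma steps_less_imp_add_le:
  fixes f :: "nat \<Rightarrow> nat"
  assumes "\<And>j. j < p \<Longrightarrow> f j < f (Suc j)"
  shows "i + k \<le> p \<Longrightarrow> f i + k \<le> f (i + k)"
proof (induction k)
  case (Suc k)
  hence "f i + k \<le> f (i + k)" "f (i + k) < f (Suc (i + k))" using assms by simp_all
  thus ?case by simp
qed simp

lemma nondeg_mor_step_less:
  assumes D: "unital D" and X: "X \<in> nondeg D" and m: "is_mor D X Y \<xi>" and i: "i < fst X"
  shows "\<xi> i < \<xi> (Suc i)"
proof (rule ccontr)
  assume "\<not> \<xi> i < \<xi> (Suc i)"
  moreover have "\<xi> i \<le> \<xi> (Suc i)" using m i unfolding is_mor_def opmap_def by auto
  ultimately have "snd X (i, Suc i) = snd X (i, i)"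
    using is_mor_apply[OF m, of i "Suc i"] is_mor_apply[OF m, of i i] i by simp
  hence "degenerate D X"
    using degenerate_if_identity_edge[OF D, of "fst X" "snd X" i] X i by (simp add: nondeg_def)
  thus False using X by (simp add: nondeg_def)
qed

lemma nondeg_mor_dim_le:
  assumes "unital D" "X \<in> nondeg D" and m: "is_mor D X Y \<xi>"
  shows "fst X \<le> fst Y"
proof -
  have "\<xi> 0 + fst X \<le> \<xi> (fst X)"
    using steps_less_imp_add_le[of "fst X" \<xi> 0 "fst X"] nondeg_mor_step_less[OF assms] by simp
  moreover have "\<xi> (fst X) \<le> fst Y" using m unfolding is_mor_def opmap_def by simp
  ultimately show ?thesis by simp
qed

lemma nondeg_mor_same_dim:
  assumes "unital D" "X \<in> nondeg D" and m: "is_mor D X Y \<xi>" and dim: "fst X = fst Y"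
  shows "\<xi> = idmap (fst X)" and "X = Y"
proof -
  let ?p = "fst X"
  note \<xi> = opmapD[of ?p "fst Y" \<xi>] and gap = steps_less_imp_add_le[of ?p \<xi>]
  have "\<xi> i = i" if "i \<le> ?p" for i
  proof -
    have "\<xi> 0 + i \<le> \<xi> i" "\<xi> i + (?p - i) \<le> \<xi> ?p"
      using gap[of 0 i] gap[of i "?p - i"] nondeg_mor_step_less[OF assms(1-3)] that by auto
    thus ?thesis using \<xi>(2)[of ?p] m dim unfolding is_mor_def by simp
  qed
  thus \<xi>_id: "\<xi> = idmap ?p" using \<xi>(3) m unfolding is_mor_def by (auto simp: idmap_def fun_eq_iff)
  show "X = Y" using m \<xi>_id dim pull_idmap[of Y D] unfolding is_mor_def by simp
qed

lemma is_mor_unique_if_vertices_inj: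
  assumes inj: "inj_on (\<lambda>j. snd Y (j, j)) {..fst Y}" and m: "is_mor D X Y \<xi>" and m': "is_mor D X Y \<eta>"
  shows "\<xi> = \<eta>"
proof
  fix i
  show "\<xi> i = \<eta> i"
  proof (cases "i \<le> fst X")
    case True
    hence "snd Y (\<xi> i, \<xi> i) = snd Y (\<eta> i, \<eta> i)"
      using is_mor_apply[OF m, of i i] is_mor_apply[OF m', of i i] by simp
    moreover have "\<xi> i \<le> fst Y" "\<eta> i \<le> fst Y" using m m' True unfolding is_mor_def opmap_def by auto
    ultimately show ?thesis by (simp add: inj_on_eq_iff[OF inj])
  next
    case False thus ?thesis using m m' unfolding is_mor_def opmap_def by auto
  qed
qed

lemma mcomp_idmap_left: "opmap p q \<xi> \<Longrightarrow> mcomp p (idmap q) \<xi> = \<xi>"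
  by (auto simp: opmap_def mcomp_def idmap_def fun_eq_iff)

lemma mcomp_idmap_right: "opmap p q \<xi> \<Longrightarrow> mcomp p \<xi> (idmap p) = \<xi>"
  by (auto simp: opmap_def mcomp_def idmap_def fun_eq_iff)

lemma sim_cls_some:
  "is_mor D X Y \<xi> \<Longrightarrow> sim D (X, Y, SOME \<eta>. \<eta> \<in> cls D X Y \<xi>) (X, Y, \<xi>)"
  using someI[of "\<lambda>\<eta>. \<eta> \<in> cls D X Y \<xi>" \<xi>] by (simp add: cls_def sim_refl)

lemma cls_eq: "sim D (X, Y, \<eta>) (X, Y, \<xi>) \<Longrightarrow> cls D X Y \<eta> = cls D X Y \<xi>"
  unfolding cls_def by (blast intro: sim_trans sim_sym)

lemma Sd_Comp_cls:
  assumes "is_mor D X Y \<xi>" "is_mor D Y Z \<eta>"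
  shows "Comp (Sd D) (Y, Z, cls D Y Z \<eta>) (X, Y, cls D X Y \<xi>) = (X, Z, cls D X Z (mcomp (fst X) \<eta> \<xi>))"
  using cls_eq[OF sim_comp[OF sim_cls_some sim_cls_some]] assms by (simp add: Sd_def)

lemma Sd_ArrE:
  assumes "f \<in> Arr (Sd D)"
  obtains X Y \<xi> where "f = (X, Y, cls D X Y \<xi>)" "X \<in> nondeg D" "Y \<in> nondeg D" "is_mor D X Y \<xi>"
  using assms by (auto simp: Sd_def)

lemma Sd_Dom_Cod [simp]: "Dom (Sd D) (X, Y, c) = X" "Cod (Sd D) (X, Y, c) = Y"
  by (simp_all add: Sd_def)

lemma Sd_Id: "Id (Sd D) X = (X, X, cls D X X (idmap (fst X)))"
  by (simp add: Sd_def)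

lemma unital_Sd: "unital (Sd D)"
  unfolding unital_def
proof (intro conjI ballI)
  fix f assume "f \<in> Arr (Sd D)"
  then obtain X Y \<xi> where f: "f = (X, Y, cls D X Y \<xi>)" and X: "X \<in> nondeg D" and Y: "Y \<in> nondeg D"
    and m: "is_mor D X Y \<xi>" by (rule Sd_ArrE)
  have \<xi>: "opmap (fst X) (fst Y) \<xi>" using m by (simp add: is_mor_def)
  show "Comp (Sd D) f (Id (Sd D) (Dom (Sd D) f)) = f"
    using Sd_Comp_cls[OF is_mor_idmap m] X f mcomp_idmap_right[OF \<xi>] by (simp add: Sd_Id nondeg_def)
  show "Comp (Sd D) (Id (Sd D) (Cod (Sd D) f)) f = f"
    using Sd_Comp_cls[OF m is_mor_idmap] Y f mcomp_idmap_left[OF \<xi>] by (simp add: Sd_Id nondeg_def)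
qed (simp add: Sd_def)

lemma nondeg_Sd_vertex_dim_step:
  assumes C: "unital C" and Y: "(q, G) \<in> nondeg (Sd C)" and j: "j < q"
  shows "fst (Dom (Sd C) (G (j, j))) < fst (Dom (Sd C) (G (Suc j, Suc j)))"
proof (rule ccontr)
  assume not_less: "\<not> ?thesis"
  have G: "(q, G) \<in> nerve (Sd C)" using Y by (simp add: nondeg_def)
  note edge = nerveD(2)[OF G, of j "Suc j"]
  obtain A B \<zeta> where e: "G (j, Suc j) = (A, B, cls C A B \<zeta>)" and A: "A \<in> nondeg C"
    and m: "is_mor C A B \<zeta>" using edge j by (auto elim: Sd_ArrE)
  have "fst A = fst B"
    using nondeg_mor_dim_le[OF C A m] not_less edge e j by auto
  hence "G (j, Suc j) = Id (Sd C) (Dom (Sd C) (G (j, j)))"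
    using nondeg_mor_same_dim[OF C A m] edge e j by (simp add: Sd_Id)
  hence "degenerate (Sd C) (q, G)"
    using degenerate_if_identity_edge[OF unital_Sd G j] nerveD(1)[OF G, of j] j by simp
  thus False using Y by (simp add: nondeg_def)
qed

lemma nondeg_Sd_vertices_inj:
  assumes C: "unital C" and Y: "Y \<in> nondeg (Sd C)"
  shows "inj_on (\<lambda>j. snd Y (j, j)) {..fst Y}"
proof -
  let ?dim = "\<lambda>j. fst (Dom (Sd C) (snd Y (j, j)))"
  have "?dim j < ?dim k" if "j < k" "k \<le> fst Y" for j k
    using steps_less_imp_add_le[of "fst Y" ?dim j "k - j"] that
      nondeg_Sd_vertex_dim_step[OF C, of "fst Y" "snd Y"] Y by simp
  hence "strict_mono_on {..fst Y} ?dim" by (auto intro: strict_mono_onI)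
  hence "inj_on ((\<lambda>g. fst (Dom (Sd C) g)) \<circ> (\<lambda>j. snd Y (j, j))) {..fst Y}"
    unfolding comp_def by (rule strict_mono_on_imp_inj_on)
  thus ?thesis by (rule inj_on_imageI2)
qed

lemma Sd_Arr_unique:
  assumes inj: "\<And>Y. Y \<in> nondeg D \<Longrightarrow> inj_on (\<lambda>j. snd Y (j, j)) {..fst Y}"
    and f: "f \<in> Arr (Sd D)" and g: "g \<in> Arr (Sd D)"
    and "Dom (Sd D) f = Dom (Sd D) g" "Cod (Sd D) f = Cod (Sd D) g"
  shows "f = g"
proof -
  obtain X Y \<xi> where f: "f = (X, Y, cls D X Y \<xi>)" "X \<in> nondeg D" "Y \<in> nondeg D" "is_mor D X Y \<xi>"
    using f by (rule Sd_ArrE)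
  obtain X' Y' \<eta> where g: "g = (X', Y', cls D X' Y' \<eta>)" "X' \<in> nondeg D" "Y' \<in> nondeg D"
    "is_mor D X' Y' \<eta>" using g by (rule Sd_ArrE)
  have "X' = X" "Y' = Y" using assms(4,5) f(1) g(1) by simp_all
  thus ?thesis using f g is_mor_unique_if_vertices_inj[OF inj, of Y D X \<xi> \<eta>] by simp
qed

lemma Sd_Arr_antisym:
  assumes D: "unital D" and f: "f \<in> Arr (Sd D)" and g: "g \<in> Arr (Sd D)"
    and "Dom (Sd D) f = Cod (Sd D) g" "Cod (Sd D) f = Dom (Sd D) g"
  shows "Dom (Sd D) f = Cod (Sd D) f"
proof -
  obtain X Y \<xi> where f: "f = (X, Y, cls D X Y \<xi>)" "X \<in> nondeg D" "Y \<in> nondeg D" "is_mor D X Y \<xi>"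
    using f by (rule Sd_ArrE)
  obtain X' Y' \<eta> where g: "g = (X', Y', cls D X' Y' \<eta>)" "X' \<in> nondeg D" "Y' \<in> nondeg D"
    "is_mor D X' Y' \<eta>" using g by (rule Sd_ArrE)
  have "X' = Y" "Y' = X" using assms(4,5) f(1) g(1) by simp_all
  hence "fst X \<le> fst Y" "fst Y \<le> fst X"
    using nondeg_mor_dim_le[OF D] f g by blast+
  hence "X = Y" using nondeg_mor_same_dim(2)[OF D f(2,4)] by simp
  thus ?thesis using f(1) by simp
qed

theorem theorem21:
  fixes C :: "('o, 'm) cat"
  assumes "is_category C"
  shows "(\<forall>f \<in> Arr (Sd (Sd C)). \<forall>g \<in> Arr (Sd (Sd C)).
            Dom (Sd (Sd C)) f = Dom (Sd (Sd C)) g \<and> Cod (Sd (Sd C)) f = Cod (Sd (Sd C)) g \<longrightarrow> f = g)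
       \<and> (\<forall>f \<in> Arr (Sd (Sd C)). \<forall>g \<in> Arr (Sd (Sd C)).
            Dom (Sd (Sd C)) f = Cod (Sd (Sd C)) g \<and> Cod (Sd (Sd C)) f = Dom (Sd (Sd C)) g
            \<longrightarrow> Dom (Sd (Sd C)) f = Cod (Sd (Sd C)) f)"
  using Sd_Arr_unique[OF nondeg_Sd_vertices_inj[OF category_unital[OF assms]]]
    Sd_Arr_antisym[OF unital_Sd] by blast

end
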